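(* Let $X\subseteq\mathbb{R}^N$ be a closed convex set, $D\in\mathbb{R}^K$, $V$ a random $K\times N$ matrix, and $S(p):=\{x\in X:\mathbb{P}(Vx\le D)\ge p\}$. If $p\in(0,1]$ and $0\in S(p)$, then $S(p)$ is star-shaped with respect to the origin, i.e. $S(p)\ne\emptyset$ and $\{\lambda x:\lambda\in[0,1]\}\subseteq S(p)$ for every $x\in S(p)$.
   Context: The inequality $Vx\le D$ is componentwise. *)

theory Defs
  imports "HOL-Probability.Probability"
begin

definition chance_prob :: "'w measure \<Rightarrow> ('w \<Rightarrow> real^'n^'k) \<Rightarrow> real^'k \<Rightarrow> real^'n \<Rightarrow> real" where
  "chance_prob M V D x = measure M {\<omega> \<in> space M. \<forall>i. (V \<omega> *v x) $ i \<le> D $ i}"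

definition chance_set :: "'w measure \<Rightarrow> (real^'n) set \<Rightarrow> ('w \<Rightarrow> real^'n^'k) \<Rightarrow> real^'k \<Rightarrow> real \<Rightarrow> (real^'n) set" where
  "chance_set M X V D p = {x \<in> X. chance_prob M V D x \<ge> p}"

end

theory Submission
  imports Defs
begin

text \<open>Since \<open>p > 0\<close>, the event \<open>V 0 \<le> D\<close> has positive probability, so it is nonempty and
  \<open>D \<ge> 0\<close>. For \<open>t \<in> [0,1]\<close> we then have \<open>V (t x) = t (V x) \<le> t D \<le> D\<close> whenever
  \<open>V x \<le> D\<close>: shrinking \<open>x\<close> towards the origin can only enlarge the event, and by convexity
  \<open>t x\<close> stays in \<open>X\<close>.\<close>

lemma convex_scaleR_mem:
  assumes "convex S" and "0 \<in> S" and "x \<in> S" and "t \<in> {0..1}"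
  shows "t *\<^sub>R x \<in> S"
  using convexD[OF assms(1-3), of "1 - t" t] assms(4) by simp

lemma mult_vec_scaleR_le:
  fixes A :: "real^'n^'k"
  assumes "\<forall>i. (A *v x) $ i \<le> D $ i" and "\<forall>i. 0 \<le> D $ i" and "t \<in> {0..1}"
  shows "(A *v (t *\<^sub>R x)) $ i \<le> D $ i"
proof -
  have "(A *v (t *\<^sub>R x)) $ i = t * (A *v x) $ i"
    by (simp add: matrix_vector_mult_scaleR)
  also have "\<dots> \<le> t * D $ i"
    using assms(1,3) by (intro mult_left_mono) auto
  also have "\<dots> \<le> D $ i"
    using assms(2,3) by (simp add: mult_left_le_one_le)
  finally show ?thesis .
qed

lemma sets_chance_event:
  fixes V :: "'w \<Rightarrow> real^'n^'k"
  assumes "V \<in> borel_measurable M"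
  shows "{\<omega> \<in> space M. \<forall>i. (V \<omega> *v x) $ i \<le> D $ i} \<in> sets M"
proof -
  have row_continuous: "continuous_on UNIV (\<lambda>A::real^'n^'k. (A *v x) $ i)" for i
    unfolding matrix_vector_mult_def by (simp, intro continuous_intros)
  have "(\<lambda>\<omega>. (V \<omega> *v x) $ i) \<in> borel_measurable M" for i
    using measurable_compose[OF assms borel_measurable_continuous_onI[OF row_continuous]]
    by (simp add: o_def)
  then show ?thesis by measurable
qed

lemma chance_prob_zero_pos_imp_nonneg:
  assumes "0 < chance_prob M V D 0"
  shows "0 \<le> D $ i"
proof (rule ccontr)
  assume "\<not> 0 \<le> D $ i"
  then have no_outcome: "{\<omega> \<in> space M. \<forall>i. (V \<omega> *v 0) $ i \<le> D $ i} = {}" by auto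
  have "chance_prob M V D 0 = 0" unfolding chance_prob_def no_outcome by simp
  with assms show False by simp
qed

lemma chance_prob_scaleR_mono:
  assumes "finite_measure M" and "V \<in> borel_measurable M"
    and "\<forall>i. 0 \<le> D $ i" and "t \<in> {0..1}"
  shows "chance_prob M V D x \<le> chance_prob M V D (t *\<^sub>R x)"
proof -
  have "{\<omega> \<in> space M. \<forall>i. (V \<omega> *v x) $ i \<le> D $ i}
      \<subseteq> {\<omega> \<in> space M. \<forall>i. (V \<omega> *v (t *\<^sub>R x)) $ i \<le> D $ i}"
    using mult_vec_scaleR_le[OF _ assms(3,4)] by blast
  then show ?thesis
    unfolding chance_prob_def
    using finite_measure.finite_measure_mono[OF assms(1) _ sets_chance_event[OF assms(2)]]
    by blast
qed

lemma chance_set_scaleR_mem: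
  assumes "finite_measure M" and "V \<in> borel_measurable M" and "convex X"
    and "0 < p" and "0 \<in> chance_set M X V D p"
    and "x \<in> chance_set M X V D p" and "t \<in> {0..1}"
  shows "t *\<^sub>R x \<in> chance_set M X V D p"
proof -
  have "0 \<in> X" and "0 < chance_prob M V D 0"
    using assms(4,5) by (auto simp: chance_set_def)
  then have "\<forall>i. 0 \<le> D $ i"
    using chance_prob_zero_pos_imp_nonneg by blast
  then have "chance_prob M V D x \<le> chance_prob M V D (t *\<^sub>R x)"
    using chance_prob_scaleR_mono[OF assms(1,2) _ assms(7)] by blast
  moreover have "t *\<^sub>R x \<in> X"
    using convex_scaleR_mem[OF assms(3) \<open>0 \<in> X\<close> _ assms(7)] assms(6)
    by (simp add: chance_set_def)
  ultimately show ?thesis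
    using assms(6) by (simp add: chance_set_def)
qed

theorem lemma2p14:
  fixes M :: "'w measure" and X :: "(real^'n) set" and V :: "'w \<Rightarrow> real^'n^'k"
    and D :: "real^'k" and p :: real
  assumes "prob_space M"
    and "V \<in> borel_measurable M"
    and "closed X" and "convex X"
    and "0 < p" and "p \<le> 1"
    and "0 \<in> chance_set M X V D p"
  shows "chance_set M X V D p \<noteq> {} \<and>
         (\<forall>x \<in> chance_set M X V D p. \<forall>t \<in> {0..1::real}. t *\<^sub>R x \<in> chance_set M X V D p)"
proof -
  have "finite_measure M"
    using assms(1) by (rule prob_space.axioms(1))
  then show ?thesis
    using chance_set_scaleR_mem[OF _ assms(2,4,5,7)] assms(7) by blast
qed

end
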